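(* Let $E$ be a Banach space, $T\colon\ell^1\to E$ a continuous linear operator with $T(e_n)\neq0$ for all $n$, and $p>1$. If $T$ is $\frac1p$-power dominated, i.e. there exists $C>0$ with $$\Big\|\sum_{j\in F}x_j^{1/p}\,T(e_j)\Big\|_E^{p}\le C\sup_{N\subset F}\Big\|\sum_{j\in N}x_jT(e_j)\Big\|_E$$ for all finite $F\subset\mathbb N$ and $(x_j)_{j\in F}\subset[0,\infty)$, then $T$ is $\frac1p$-th power factorable with a continuous extension, i.e. $T$ admits a continuous linear extension $S\colon\ell^p\to E$.
   Context: $e_n=\chi_{\{n\}}$ denotes the $n$-th unit sequence; $\ell^1\subset\ell^p$ for $p>1$. *)

theory Defs
  imports "HOL-Analysis.Analysis"
begin

definition unit_seq :: "nat \<Rightarrow> nat \<Rightarrow> real" where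
  "unit_seq n = (\<lambda>k. if k = n then 1 else 0)"

definition lp_space :: "real \<Rightarrow> (nat \<Rightarrow> real) set" where
  "lp_space p = {x. summable (\<lambda>n. \<bar>x n\<bar> powr p)}"

definition lp_norm :: "real \<Rightarrow> (nat \<Rightarrow> real) \<Rightarrow> real" where
  "lp_norm p x = (\<Sum>n. \<bar>x n\<bar> powr p) powr (1 / p)"

definition bounded_linear_on_lp :: "real \<Rightarrow> ((nat \<Rightarrow> real) \<Rightarrow> 'e::real_normed_vector) \<Rightarrow> bool" where
  "bounded_linear_on_lp p T \<longleftrightarrow>
     (\<forall>x\<in>lp_space p. \<forall>y\<in>lp_space p. T (\<lambda>n. x n + y n) = T x + T y) \<and>
     (\<forall>x\<in>lp_space p. \<forall>c::real. T (\<lambda>n. c * x n) = c *\<^sub>R T x) \<and>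
     (\<exists>K. \<forall>x\<in>lp_space p. norm (T x) \<le> K * lp_norm p x)"

end

theory Submission
  imports Defs
begin

text \<open>
  Write \<open>v j = T (unit_seq j)\<close>; these vectors are bounded by \<open>\<parallel>T\<parallel>\<close>. Feeding
  \<open>x j = \<bar>y j\<bar> powr p\<close> into the domination inequality and bounding the supremum crudely by
  \<open>\<parallel>T\<parallel> * (\<Sum>j\<in>F. x j)\<close> gives
  \<open>\<parallel>\<Sum>j\<in>F. y j *\<^sub>R v j\<parallel> powr p \<le> B * (\<Sum>j\<in>F. \<bar>y j\<bar> powr p)\<close> for all finite \<open>F\<close>, with a constant \<open>B\<close>.
  Hence the series \<open>\<Sum>j. y j *\<^sub>R v j\<close> is Cauchy for every \<open>y \<in> \<ell>\<^sup>p\<close> and defines a bounded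
  operator \<open>S\<close> on \<open>\<ell>\<^sup>p\<close>; on \<open>\<ell>\<^sup>1\<close> it agrees with \<open>T\<close> because the truncations of an
  \<open>\<ell>\<^sup>1\<close> sequence converge in norm.
\<close>

lemma lp_space_one_iff: "x \<in> lp_space 1 \<longleftrightarrow> summable (\<lambda>n. \<bar>x n\<bar>)"
  by (simp add: lp_space_def)

lemma lp_norm_one: "x \<in> lp_space 1 \<Longrightarrow> lp_norm 1 x = (\<Sum>n. \<bar>x n\<bar>)"
  by (simp add: lp_norm_def lp_space_one_iff suminf_nonneg)

lemma lp_norm_nonneg: "lp_norm p x \<ge> 0"
  by (simp add: lp_norm_def)

lemma finite_support_in_lp_space:
  "finite F \<Longrightarrow> (\<lambda>k. if k \<in> F then a k else 0) \<in> lp_space p"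
  unfolding lp_space_def by (auto intro!: summable_finite[of F])

lemma unit_seq_in_lp_space: "unit_seq j \<in> lp_space p"
proof -
  have "unit_seq j = (\<lambda>k. if k \<in> {j} then 1 else 0)"
    by (auto simp: unit_seq_def)
  then show ?thesis
    using finite_support_in_lp_space[of "{j}" "\<lambda>_. 1" p] by simp
qed

lemma lp_norm_unit_seq: "lp_norm p (unit_seq j) = 1"
proof -
  have "(\<Sum>n. \<bar>unit_seq j n\<bar> powr p) = (\<Sum>n\<in>{j}. \<bar>unit_seq j n\<bar> powr p)"
    by (rule suminf_finite) (auto simp: unit_seq_def)
  then show ?thesis by (simp add: lp_norm_def unit_seq_def)
qed

lemma bounded_linear_on_lpE:
  assumes "bounded_linear_on_lp p T"
  obtains K where "K \<ge> 0"
    and "\<And>x y. x \<in> lp_space p \<Longrightarrow> y \<in> lp_space p \<Longrightarrow> T (\<lambda>n. x n + y n) = T x + T y"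
    and "\<And>x c. x \<in> lp_space p \<Longrightarrow> T (\<lambda>n. c * x n) = c *\<^sub>R T x"
    and "\<And>x. x \<in> lp_space p \<Longrightarrow> norm (T x) \<le> K * lp_norm p x"
proof -
  obtain K where K: "\<And>x. x \<in> lp_space p \<Longrightarrow> norm (T x) \<le> K * lp_norm p x"
    using assms unfolding bounded_linear_on_lp_def by blast
  have "norm (T x) \<le> max K 0 * lp_norm p x" if "x \<in> lp_space p" for x
  proof -
    have "K * lp_norm p x \<le> max K 0 * lp_norm p x"
      by (intro mult_right_mono lp_norm_nonneg) simp
    with K[OF that] show ?thesis by linarith
  qed
  with assms that[of "max K 0"] show thesis
    unfolding bounded_linear_on_lp_def by auto
qed

lemma bounded_linear_on_lp_finite_support:
  assumes "bounded_linear_on_lp p T" and "finite F"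
  shows "T (\<lambda>k. if k \<in> F then a k else 0) = (\<Sum>j\<in>F. a j *\<^sub>R T (unit_seq j))"
  using assms(2)
proof (induction F rule: finite_induct)
  case empty
  have "T (\<lambda>k. 0 * unit_seq 0 k) = 0 *\<^sub>R T (unit_seq 0)"
    using assms(1) unit_seq_in_lp_space unfolding bounded_linear_on_lp_def by blast
  then show ?case by simp
next
  case (insert j F)
  have "(\<lambda>k. if k \<in> insert j F then a k else 0) =
        (\<lambda>k. a j * unit_seq j k + (if k \<in> F then a k else 0))"
    using insert.hyps(2) by (auto simp: unit_seq_def)
  moreover have "(\<lambda>k. a j * unit_seq j k) = (\<lambda>k. if k \<in> {j} then a j else 0)"
    by (auto simp: unit_seq_def)
  then have "(\<lambda>k. a j * unit_seq j k) \<in> lp_space p"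
    using finite_support_in_lp_space[of "{j}" "\<lambda>_. a j" p] by simp
  ultimately show ?case
    using assms(1) insert finite_support_in_lp_space[OF insert.hyps(1)] unit_seq_in_lp_space
    by (auto simp: bounded_linear_on_lp_def)
qed

lemma bounded_linear_on_l1_sums:
  assumes T: "bounded_linear_on_lp 1 T" and x: "x \<in> lp_space 1"
  shows "(\<lambda>j. x j *\<^sub>R T (unit_seq j)) sums T x"
proof -
  obtain K where add: "\<And>x y. x \<in> lp_space 1 \<Longrightarrow> y \<in> lp_space 1 \<Longrightarrow> T (\<lambda>n. x n + y n) = T x + T y"
    and bound: "\<And>x. x \<in> lp_space 1 \<Longrightarrow> norm (T x) \<le> K * lp_norm 1 x"
    using bounded_linear_on_lpE[OF T] by metis
  define head where "head n = (\<lambda>k. if k \<in> {..<n} then x k else 0)" for n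
  define tail where "tail n = (\<lambda>k. if k \<in> {..<n} then 0 else x k)" for n
  have x_summable: "summable (\<lambda>k. \<bar>x k\<bar>)"
    using x lp_space_one_iff by blast
  have head_l1: "head n \<in> lp_space 1" for n
    unfolding head_def by (rule finite_support_in_lp_space) simp
  have tail_summable: "summable (\<lambda>k. \<bar>tail n k\<bar>)" for n
    by (rule summable_comparison_test[OF _ x_summable]) (auto simp: tail_def)
  then have tail_l1: "tail n \<in> lp_space 1" for n
    using lp_space_one_iff by blast
  have "lp_norm 1 (tail n) = (\<Sum>k. \<bar>tail n k\<bar>)" for n
    by (rule lp_norm_one[OF tail_l1])
  also have "\<dots> n = (\<Sum>k. \<bar>x (k + n)\<bar>)" for n
    using suminf_split_initial_segment[OF tail_summable, of n n] by (simp add: tail_def)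
  also have "\<dots> n = (\<Sum>k. \<bar>x k\<bar>) - (\<Sum>k<n. \<bar>x k\<bar>)" for n
    by (rule suminf_minus_initial_segment[OF x_summable])
  finally have tail_norm: "lp_norm 1 (tail n) = (\<Sum>k. \<bar>x k\<bar>) - (\<Sum>k<n. \<bar>x k\<bar>)" for n .
  have "(\<lambda>n. (\<Sum>k. \<bar>x k\<bar>) - (\<Sum>k<n. \<bar>x k\<bar>)) \<longlonglongrightarrow> (\<Sum>k. \<bar>x k\<bar>) - (\<Sum>k. \<bar>x k\<bar>)"
    by (intro tendsto_diff tendsto_const summable_LIMSEQ x_summable)
  then have "(\<lambda>n. K * lp_norm 1 (tail n)) \<longlonglongrightarrow> 0"
    unfolding tail_norm using tendsto_mult_right_zero by fastforce
  then have "(\<lambda>n. T (tail n)) \<longlonglongrightarrow> 0"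
    by (rule Lim_null_comparison[rotated]) (use bound tail_l1 in auto)
  moreover have "T (tail n) = T x - (\<Sum>j<n. x j *\<^sub>R T (unit_seq j))" for n
  proof -
    have "x = (\<lambda>k. head n k + tail n k)"
      by (auto simp: head_def tail_def)
    then have "T x = T (head n) + T (tail n)"
      using add[OF head_l1 tail_l1] by metis
    then show ?thesis
      using bounded_linear_on_lp_finite_support[OF T, of "{..<n}" x] by (simp add: head_def)
  qed
  ultimately have "(\<lambda>n. T x - (T x - (\<Sum>j<n. x j *\<^sub>R T (unit_seq j)))) \<longlonglongrightarrow> T x - 0"
    by (intro tendsto_diff tendsto_const) simp
  then show ?thesis
    by (simp add: sums_def)
qed

lemma powr_add_le_two_powr:
  fixes a b p :: real
  assumes "0 \<le> a" "0 \<le> b" "p \<ge> 0"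
  shows "(a + b) powr p \<le> 2 powr p * (a powr p + b powr p)"
proof -
  have "(a + b) powr p \<le> (2 * max a b) powr p"
    using assms by (intro powr_mono2) auto
  also have "\<dots> = 2 powr p * max a b powr p"
    using assms by (simp add: powr_mult)
  also have "max a b powr p \<le> a powr p + b powr p"
    by (simp add: max_def)
  finally show ?thesis
    by simp
qed

definition power_dominated :: "real \<Rightarrow> real \<Rightarrow> (nat \<Rightarrow> 'e::real_normed_vector) \<Rightarrow> bool" where
  "power_dominated p C v \<longleftrightarrow>
     (\<forall>F x. finite F \<longrightarrow> (\<forall>j\<in>F. x j \<ge> 0) \<longrightarrow>
        norm (\<Sum>j\<in>F. x j powr (1 / p) *\<^sub>R v j) powr p
          \<le> C * (SUP N\<in>Pow F. norm (\<Sum>j\<in>N. x j *\<^sub>R v j)))"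

lemma SUP_subset_sum_le:
  fixes v :: "nat \<Rightarrow> 'e::real_normed_vector"
  assumes "finite F" "\<forall>j\<in>F. x j \<ge> 0" "\<And>j. norm (v j) \<le> K"
  shows "(SUP N\<in>Pow F. norm (\<Sum>j\<in>N. x j *\<^sub>R v j)) \<le> K * (\<Sum>j\<in>F. x j)"
proof (rule cSUP_least)
  fix N assume N: "N \<in> Pow F"
  have "norm (\<Sum>j\<in>N. x j *\<^sub>R v j) \<le> (\<Sum>j\<in>N. x j * K)"
  proof (rule sum_norm_le)
    fix j assume "j \<in> N"
    then show "norm (x j *\<^sub>R v j) \<le> x j * K"
      using N assms(2,3) by (auto simp: mult_left_mono)
  qed
  also have "\<dots> \<le> (\<Sum>j\<in>F. x j * K)"
    using N assms order_trans[OF norm_ge_zero assms(3)] by (intro sum_mono2) auto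
  finally show "norm (\<Sum>j\<in>N. x j *\<^sub>R v j) \<le> K * (\<Sum>j\<in>F. x j)"
    by (simp add: sum_distrib_left mult.commute)
qed blast

lemma power_dominated_nonneg_sum_bound:
  fixes v :: "nat \<Rightarrow> 'e::real_normed_vector"
  assumes dom: "power_dominated p C v" and "p > 0" "C \<ge> 0" "\<And>j. norm (v j) \<le> K"
    and F: "finite F" and y: "\<forall>j\<in>F. y j \<ge> 0"
  shows "norm (\<Sum>j\<in>F. y j *\<^sub>R v j) powr p \<le> C * K * (\<Sum>j\<in>F. y j powr p)"
proof -
  have "(\<Sum>j\<in>F. y j *\<^sub>R v j) = (\<Sum>j\<in>F. (y j powr p) powr (1 / p) *\<^sub>R v j)"
    using y \<open>p > 0\<close> by (intro sum.cong) (simp_all add: powr_powr)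
  then have "norm (\<Sum>j\<in>F. y j *\<^sub>R v j) powr p
      \<le> C * (SUP N\<in>Pow F. norm (\<Sum>j\<in>N. y j powr p *\<^sub>R v j))"
    using dom F unfolding power_dominated_def by simp
  also have "\<dots> \<le> C * (K * (\<Sum>j\<in>F. y j powr p))"
    using assms by (intro mult_left_mono SUP_subset_sum_le) auto
  finally show ?thesis
    by (simp add: mult.assoc)
qed

text \<open>Splitting into positive and negative parts costs the factor \<open>2 powr p\<close>.\<close>
lemma power_dominated_sum_bound:
  fixes v :: "nat \<Rightarrow> 'e::real_normed_vector"
  assumes dom: "power_dominated p C v" and p: "p > 0" and C: "C \<ge> 0" and K: "\<And>j. norm (v j) \<le> K"
    and F: "finite F"
  shows "norm (\<Sum>j\<in>F. y j *\<^sub>R v j) powr p \<le> 2 powr p * C * K * (\<Sum>j\<in>F. \<bar>y j\<bar> powr p)"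
proof -
  define a where "a j = max (y j) 0" for j
  define b where "b j = max (- y j) 0" for j
  define A where "A = norm (\<Sum>j\<in>F. a j *\<^sub>R v j)"
  define B where "B = norm (\<Sum>j\<in>F. b j *\<^sub>R v j)"
  have "y j = a j - b j" for j
    by (simp add: a_def b_def max_def)
  then have "(\<Sum>j\<in>F. y j *\<^sub>R v j) = (\<Sum>j\<in>F. a j *\<^sub>R v j) - (\<Sum>j\<in>F. b j *\<^sub>R v j)"
    by (simp add: scaleR_diff_left sum_subtractf)
  then have "norm (\<Sum>j\<in>F. y j *\<^sub>R v j) \<le> A + B"
    unfolding A_def B_def by (metis norm_triangle_ineq4)
  then have "norm (\<Sum>j\<in>F. y j *\<^sub>R v j) powr p \<le> (A + B) powr p"
    using p by (intro powr_mono2) auto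
  also have "\<dots> \<le> 2 powr p * (A powr p + B powr p)"
    using p by (intro powr_add_le_two_powr) (auto simp: A_def B_def)
  also have "\<dots> \<le> 2 powr p * (C * K * (\<Sum>j\<in>F. a j powr p) + C * K * (\<Sum>j\<in>F. b j powr p))"
    unfolding A_def B_def
    by (intro mult_left_mono add_mono power_dominated_nonneg_sum_bound[OF dom p C K F])
      (auto simp: a_def b_def)
  also have "\<dots> = 2 powr p * C * K * (\<Sum>j\<in>F. a j powr p + b j powr p)"
    by (simp add: sum.distrib algebra_simps)
  also have "(\<Sum>j\<in>F. a j powr p + b j powr p) = (\<Sum>j\<in>F. \<bar>y j\<bar> powr p)"
    by (intro sum.cong) (auto simp: a_def b_def max_def)
  finally show ?thesis .
qed

lemma powr_le_imp_le_root:
  fixes a c p :: real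
  assumes "0 \<le> a" "p > 0" "a powr p \<le> c"
  shows "a \<le> c powr (1 / p)"
proof -
  have "a = (a powr p) powr (1 / p)"
    using assms by (simp add: powr_powr)
  also have "\<dots> \<le> c powr (1 / p)"
    using assms by (intro powr_mono2) auto
  finally show ?thesis .
qed

context
  fixes v :: "nat \<Rightarrow> 'e::banach" and p B :: real and y :: "nat \<Rightarrow> real"
  assumes p: "p > 0" and B: "B \<ge> 0"
    and bound: "\<And>F. finite F \<Longrightarrow> norm (\<Sum>j\<in>F. y j *\<^sub>R v j) powr p \<le> B * (\<Sum>j\<in>F. \<bar>y j\<bar> powr p)"
    and y: "y \<in> lp_space p"
begin

lemma summable_scaleR_of_lp_bound: "summable (\<lambda>j. y j *\<^sub>R v j)"
  unfolding summable_Cauchy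
proof (intro allI impI)
  fix e :: real assume e: "e > 0"
  define g where "g = (\<lambda>n. \<bar>y n\<bar> powr p)"
  define e' where "e' = e powr p / (B + 1)"
  have "summable g" "e' > 0"
    using y e B by (simp_all add: g_def e'_def lp_space_def)
  then obtain N where N: "\<forall>m\<ge>N. \<forall>n. norm (sum g {m..<n}) < e'"
    unfolding summable_Cauchy by blast
  have "norm (\<Sum>j\<in>{m..<n}. y j *\<^sub>R v j) < e" if "m \<ge> N" for m n
  proof (rule ccontr)
    assume "\<not> ?thesis"
    then have "e powr p \<le> norm (\<Sum>j\<in>{m..<n}. y j *\<^sub>R v j) powr p"
      using e p by (intro powr_mono2) auto
    also have "\<dots> \<le> B * sum g {m..<n}"
      using bound[of "{m..<n}"] by (simp add: g_def)
    also have "\<dots> \<le> B * e'"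
      using N[rule_format, OF that, of n] B
      by (intro mult_left_mono) (simp_all add: g_def abs_of_nonneg sum_nonneg)
    also have "\<dots> < e powr p"
      using e B by (simp add: e'_def field_simps)
    finally show False by simp
  qed
  then show "\<exists>N. \<forall>m\<ge>N. \<forall>n. norm (\<Sum>j\<in>{m..<n}. y j *\<^sub>R v j) < e"
    by blast
qed

lemma norm_suminf_scaleR_le_lp_norm:
  "norm (\<Sum>j. y j *\<^sub>R v j) \<le> B powr (1 / p) * lp_norm p y"
proof -
  define g where "g = (\<lambda>n. \<bar>y n\<bar> powr p)"
  have g: "summable g" "\<And>n. g n \<ge> 0"
    using y by (simp_all add: g_def lp_space_def)
  have "norm (\<Sum>j<n. y j *\<^sub>R v j) \<le> (B * suminf g) powr (1 / p)" for n
  proof (rule powr_le_imp_le_root)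
    have "norm (\<Sum>j<n. y j *\<^sub>R v j) powr p \<le> B * sum g {..<n}"
      using bound[of "{..<n}"] by (simp add: g_def)
    also have "\<dots> \<le> B * suminf g"
      using B g by (intro mult_left_mono sum_le_suminf) auto
    finally show "norm (\<Sum>j<n. y j *\<^sub>R v j) powr p \<le> B * suminf g" .
  qed (use p in auto)
  then have "norm (\<Sum>j. y j *\<^sub>R v j) \<le> (B * suminf g) powr (1 / p)"
    by (intro LIMSEQ_le_const2[OF tendsto_norm[OF summable_LIMSEQ[OF summable_scaleR_of_lp_bound]]])
      auto
  also have "\<dots> = B powr (1 / p) * lp_norm p y"
    using B g by (simp add: lp_norm_def g_def powr_mult suminf_nonneg)
  finally show ?thesis .
qed

end

lemma bounded_linear_on_lp_suminf_scaleR: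
  fixes v :: "nat \<Rightarrow> 'e::banach"
  assumes p: "p > 0" and B: "B \<ge> 0"
    and bound: "\<And>F y. finite F \<Longrightarrow> norm (\<Sum>j\<in>F. y j *\<^sub>R v j) powr p \<le> B * (\<Sum>j\<in>F. \<bar>y j\<bar> powr p)"
  shows "bounded_linear_on_lp p (\<lambda>y. \<Sum>j. y j *\<^sub>R v j)"
  unfolding bounded_linear_on_lp_def
proof (intro conjI ballI allI exI)
  fix x y assume "x \<in> lp_space p" "y \<in> lp_space p"
  then show "(\<Sum>j. (x j + y j) *\<^sub>R v j) = (\<Sum>j. x j *\<^sub>R v j) + (\<Sum>j. y j *\<^sub>R v j)"
    by (simp add: scaleR_add_left suminf_add summable_scaleR_of_lp_bound[OF p B bound])
next
  fix x c assume "x \<in> lp_space p"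
  then show "(\<Sum>j. (c * x j) *\<^sub>R v j) = c *\<^sub>R (\<Sum>j. x j *\<^sub>R v j)"
    by (simp add: suminf_scaleR_right summable_scaleR_of_lp_bound[OF p B bound]
        flip: scaleR_scaleR)
next
  fix y assume "y \<in> lp_space p"
  then show "norm (\<Sum>j. y j *\<^sub>R v j) \<le> B powr (1 / p) * lp_norm p y"
    using norm_suminf_scaleR_le_lp_norm[OF p B bound] by blast
qed

theorem lemma7p5:
  fixes T :: "(nat \<Rightarrow> real) \<Rightarrow> 'e::banach" and p :: real
  assumes T_cont: "bounded_linear_on_lp 1 T"
    and T_nonzero: "\<And>n. T (unit_seq n) \<noteq> 0"
    and p_gt: "p > 1"
    and dominated: "\<exists>C>0. \<forall>F x. finite F \<longrightarrow> (\<forall>j\<in>F. x j \<ge> (0::real)) \<longrightarrow>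
        norm (\<Sum>j\<in>F. x j powr (1 / p) *\<^sub>R T (unit_seq j)) powr p
          \<le> C * (SUP N\<in>Pow F. norm (\<Sum>j\<in>N. x j *\<^sub>R T (unit_seq j)))"
  shows "\<exists>S :: (nat \<Rightarrow> real) \<Rightarrow> 'e. bounded_linear_on_lp p S \<and> (\<forall>x\<in>lp_space 1. S x = T x)"
proof -
  define v where "v j = T (unit_seq j)" for j
  obtain C where C: "C > 0" and dom: "power_dominated p C v"
    using dominated unfolding power_dominated_def v_def by blast
  obtain K where K: "K \<ge> 0" and T_bound: "\<And>x. x \<in> lp_space 1 \<Longrightarrow> norm (T x) \<le> K * lp_norm 1 x"
    using bounded_linear_on_lpE[OF T_cont] by metis
  have v_bound: "norm (v j) \<le> K" for j
    using T_bound[OF unit_seq_in_lp_space] by (simp add: v_def lp_norm_unit_seq)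
  define S where "S y = (\<Sum>j. y j *\<^sub>R v j)" for y
  have "bounded_linear_on_lp p S"
    unfolding S_def using p_gt C K
    by (intro bounded_linear_on_lp_suminf_scaleR[where B = "2 powr p * C * K"]
        power_dominated_sum_bound[OF dom _ _ v_bound]) auto
  moreover have "S x = T x" if "x \<in> lp_space 1" for x
    using sums_unique[OF bounded_linear_on_l1_sums[OF T_cont that]] by (simp add: S_def v_def)
  ultimately show ?thesis
    by blast
qed

end
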